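(* Let $(X,\tau)$ be a locally strongly compact topological space and $A$ a pre-closed subset of $X$. Then $A$ with the relative topology is locally strongly compact, in the sense that for every $x\in A$ there is $G\subseteq A$ and a pre-open set $V$ of $X$ with $x\in V\cap A\subseteq G$ and such that every cover of $G$ by sets of the form $W\cap G$, $W$ pre-open in $X$, has a finite subcover.
   Context: A subset $B$ of a topological space is pre-open if $B\subseteq Int(Cl(B))$, pre-closed if its complement is pre-open. A subset $B\subseteq X$ is strongly compact (as a subspace) if every cover of $B$ by sets $W\cap B$, $W$ pre-open in $X$, has a finite subcover. $X$ is locally strongly compact if for every $x\in X$ there is $B\subseteq X$ and a pre-open $V$ with $x\in V\subseteq B$ and $B$ strongly compact. *)

theory Defs
  imports "HOL-Analysis.Analysis"
begin

definition preopen :: "'a topology \<Rightarrow> 'a set \<Rightarrow> bool" where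
  "preopen X B \<longleftrightarrow> B \<subseteq> topspace X \<and> B \<subseteq> X interior_of (X closure_of B)"

definition preclosed :: "'a topology \<Rightarrow> 'a set \<Rightarrow> bool" where
  "preclosed X A \<longleftrightarrow> A \<subseteq> topspace X \<and> preopen X (topspace X - A)"

definition strongly_compact :: "'a topology \<Rightarrow> 'a set \<Rightarrow> bool" where
  "strongly_compact X B \<longleftrightarrow> B \<subseteq> topspace X \<and>
     (\<forall>\<U>. (\<forall>U\<in>\<U>. \<exists>W. preopen X W \<and> U = W \<inter> B) \<and> B \<subseteq> \<Union>\<U> \<longrightarrow>
        (\<exists>\<F>. finite \<F> \<and> \<F> \<subseteq> \<U> \<and> B \<subseteq> \<Union>\<F>))"

definition locally_strongly_compact :: "'a topology \<Rightarrow> bool" where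
  "locally_strongly_compact X \<longleftrightarrow>
     (\<forall>x\<in>topspace X. \<exists>B V. B \<subseteq> topspace X \<and> preopen X V \<and> x \<in> V \<and> V \<subseteq> B \<and> strongly_compact X B)"

end

theory Submission
  imports Defs
begin

text \<open>A pre-closed set A meets a strongly compact set B in a strongly compact set: a pre-open
  cover of B \<inter> A, enlarged by the pre-open complement of A, covers B, and dropping that
  complement from a finite subcover leaves a finite subcover of B \<inter> A.\<close>

lemma strongly_compactD:
  assumes "strongly_compact X B" and "\<And>W. W \<in> \<W> \<Longrightarrow> preopen X W" and "B \<subseteq> \<Union>\<W>"
  obtains \<F> where "finite \<F>" "\<F> \<subseteq> \<W>" "B \<subseteq> \<Union>\<F>"
proof -
  let ?\<U> = "(\<lambda>W. W \<inter> B) ` \<W>"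
  have "\<forall>U\<in>?\<U>. \<exists>W. preopen X W \<and> U = W \<inter> B" using assms(2) by blast
  moreover have "B \<subseteq> \<Union>?\<U>" using assms(3) by blast
  ultimately obtain \<F> where \<F>: "finite \<F>" "\<F> \<subseteq> ?\<U>" "B \<subseteq> \<Union>\<F>"
    using assms(1) unfolding strongly_compact_def by meson
  then obtain \<F>' where "\<F>' \<subseteq> \<W>" "finite \<F>'" "\<F> = (\<lambda>W. W \<inter> B) ` \<F>'"
    by (meson finite_subset_image)
  with \<F>(3) have "B \<subseteq> \<Union>\<F>'" by blast
  with \<open>finite \<F>'\<close> \<open>\<F>' \<subseteq> \<W>\<close> show thesis by (rule that)
qed

lemma strongly_compactI:
  assumes "B \<subseteq> topspace X"
    and "\<And>\<W>. \<lbrakk>\<And>W. W \<in> \<W> \<Longrightarrow> preopen X W; B \<subseteq> \<Union>\<W>\<rbrakk>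
           \<Longrightarrow> \<exists>\<F>. finite \<F> \<and> \<F> \<subseteq> \<W> \<and> B \<subseteq> \<Union>\<F>"
  shows "strongly_compact X B"
  unfolding strongly_compact_def
proof (intro conjI allI impI)
  fix \<U> assume \<U>: "(\<forall>U\<in>\<U>. \<exists>W. preopen X W \<and> U = W \<inter> B) \<and> B \<subseteq> \<Union>\<U>"
  then obtain w where w: "\<And>U. U \<in> \<U> \<Longrightarrow> preopen X (w U) \<and> U = w U \<inter> B"
    by metis
  have "B \<subseteq> \<Union>(w ` \<U>)" using \<U> w by blast
  then obtain \<F> where \<F>: "finite \<F>" "\<F> \<subseteq> w ` \<U>" "B \<subseteq> \<Union>\<F>"
    using assms(2)[of "w ` \<U>"] w by blast
  then obtain \<U>' where "\<U>' \<subseteq> \<U>" "finite \<U>'" "\<F> = w ` \<U>'"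
    by (meson finite_subset_image)
  moreover have "B \<subseteq> \<Union>\<U>'" using \<F>(3) w \<open>\<U>' \<subseteq> \<U>\<close> \<open>\<F> = w ` \<U>'\<close> by blast
  ultimately show "\<exists>\<F>. finite \<F> \<and> \<F> \<subseteq> \<U> \<and> B \<subseteq> \<Union>\<F>" by blast
qed (fact assms(1))

lemma strongly_compact_Int_preclosed:
  assumes "strongly_compact X B" and "preclosed X A"
  shows "strongly_compact X (B \<inter> A)"
proof (rule strongly_compactI)
  have "B \<subseteq> topspace X" and preopen_compl: "preopen X (topspace X - A)"
    using assms unfolding preclosed_def strongly_compact_def by auto
  then show "B \<inter> A \<subseteq> topspace X" by blast
  fix \<W> assume "\<And>W. W \<in> \<W> \<Longrightarrow> preopen X W" and "B \<inter> A \<subseteq> \<Union>\<W>"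
  then have "\<And>W. W \<in> insert (topspace X - A) \<W> \<Longrightarrow> preopen X W"
    and "B \<subseteq> \<Union>(insert (topspace X - A) \<W>)"
    using preopen_compl \<open>B \<subseteq> topspace X\<close> by blast+
  then obtain \<F> where "finite \<F>" "\<F> \<subseteq> insert (topspace X - A) \<W>" "B \<subseteq> \<Union>\<F>"
    using assms(1) strongly_compactD by metis
  then have "finite (\<F> - {topspace X - A}) \<and> \<F> - {topspace X - A} \<subseteq> \<W> \<and>
      B \<inter> A \<subseteq> \<Union>(\<F> - {topspace X - A})"
    by blast
  then show "\<exists>\<F>. finite \<F> \<and> \<F> \<subseteq> \<W> \<and> B \<inter> A \<subseteq> \<Union>\<F>" by blast
qed

theorem corollary4p1:
  fixes X :: "'a topology" and A :: "'a set"
  assumes "locally_strongly_compact X"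
    and "preclosed X A"
  shows "\<forall>x\<in>A. \<exists>G V. G \<subseteq> A \<and> preopen X V \<and> x \<in> V \<inter> A \<and> V \<inter> A \<subseteq> G \<and>
            strongly_compact X G"
proof
  fix x assume "x \<in> A"
  moreover have "A \<subseteq> topspace X" using assms(2) unfolding preclosed_def by blast
  ultimately obtain B V where "preopen X V" "x \<in> V" "V \<subseteq> B" "strongly_compact X B"
    using assms(1) unfolding locally_strongly_compact_def by blast
  then have "B \<inter> A \<subseteq> A" "x \<in> V \<inter> A" "V \<inter> A \<subseteq> B \<inter> A" "strongly_compact X (B \<inter> A)"
    using \<open>x \<in> A\<close> strongly_compact_Int_preclosed[OF _ assms(2)] by auto
  with \<open>preopen X V\<close> show "\<exists>G V. G \<subseteq> A \<and> preopen X V \<and> x \<in> V \<inter> A \<and> V \<inter> A \<subseteq> G \<and>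
            strongly_compact X G"
    by blast
qed

end
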